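(* Let $k$ be an integer. (1) Any root quadruple $\mathbf a=(a,b,c,d)$ with $Q_{\mathcal D}(\mathbf a)=k$, $a\le b\le c\le d$ and $L(\mathbf a)>0$ satisfies $0\le b\le c\le d$; moreover, if $k>0$ then $a<0$, and if $k\le0$ then $a\le\sqrt{|k|}$. (2) For each pair of integers $(k,-n)$ there are only finitely many root quadruples $\mathbf a=(a,b,c,d)$, $a\le b\le c\le d$, with $Q_{\mathcal D}(\mathbf a)=k$ and $a=-n$, except for the pairs $(k,-n)=(4l^2,-l)$ with $l\ge0$; for each such exceptional pair there is an infinite family of root quadruples $\{(-l,l,c,c):c\ge\max(l,1)\}$.
   Context: $Q_{\mathcal D}(a,b,c,d)=2(a^2+b^2+c^2+d^2)-(a+b+c+d)^2$, $L(\mathbf a)=a+b+c+d$, $|\mathbf a|=|a|+|b|+|c|+|d|$. $\mathbf S_i$ ($i=1,\dots,4$) is the integer matrix replacing the $i$-th coordinate $a_i$ of a quadruple by $2\sum_{j\ne i}a_j-a_i$, other coordinates fixed. An integer quadruple is reduced if no $\mathbf S_i$ strictly decreases $|\cdot|$. A reduced quadruple ordered as $a\le b\le c\le d$ with $L\ge 0$ is a root quadruple if $a+b+c\ge d>0$; a reduced quadruple with $L<0$ is a root quadruple if $(-d,-c,-b,-a)$ is one. *)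

theory Defs
  imports Complex_Main
begin

type_synonym quad = "int \<times> int \<times> int \<times> int"

definition QD :: "quad \<Rightarrow> int" where
  "QD q = (case q of (a,b,c,d) \<Rightarrow> 2*(a^2+b^2+c^2+d^2) - (a+b+c+d)^2)"

definition Lsum :: "quad \<Rightarrow> int" where
  "Lsum q = (case q of (a,b,c,d) \<Rightarrow> a+b+c+d)"

definition norm1 :: "quad \<Rightarrow> int" where
  "norm1 q = (case q of (a,b,c,d) \<Rightarrow> \<bar>a\<bar>+\<bar>b\<bar>+\<bar>c\<bar>+\<bar>d\<bar>)"

definition S :: "nat \<Rightarrow> quad \<Rightarrow> quad" where
  "S i q = (case q of (a,b,c,d) \<Rightarrow>
     (if i = 1 then (2*(b+c+d) - a, b, c, d)
      else if i = 2 then (a, 2*(a+c+d) - b, c, d)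
      else if i = 3 then (a, b, 2*(a+b+d) - c, d)
      else if i = 4 then (a, b, c, 2*(a+b+c) - d)
      else (a,b,c,d)))"

definition reduced :: "quad \<Rightarrow> bool" where
  "reduced q \<longleftrightarrow> (\<forall>i\<in>{1..4::nat}. \<not> norm1 (S i q) < norm1 q)"

definition root_nonneg :: "int \<Rightarrow> int \<Rightarrow> int \<Rightarrow> int \<Rightarrow> bool" where
  "root_nonneg a b c d \<longleftrightarrow> a \<le> b \<and> b \<le> c \<and> c \<le> d \<and> reduced (a,b,c,d)
     \<and> Lsum (a,b,c,d) \<ge> 0 \<and> a + b + c \<ge> d \<and> d > 0"

definition root_quad :: "int \<Rightarrow> int \<Rightarrow> int \<Rightarrow> int \<Rightarrow> bool" where
  "root_quad a b c d \<longleftrightarrow> root_nonneg a b c d \<or>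
     (a \<le> b \<and> b \<le> c \<and> c \<le> d \<and> reduced (a,b,c,d) \<and> Lsum (a,b,c,d) < 0
      \<and> root_nonneg (-d) (-c) (-b) (-a))"

end

theory Submission
  imports Defs
begin

text \<open>Write \<open>e = a + b + c - d\<close>. Then \<open>Q\<^sub>D(a,b,c,d) = e\<^sup>2 + 4a\<^sup>2 - 4(a+b)(a+c)\<close>, and for a
  root quadruple with \<open>L \<ge> 0\<close> the ordering together with \<open>d \<le> a + b + c\<close> gives
  \<open>0 \<le> e \<le> a + b \<le> a + c\<close>, hence \<open>3(a+b)(a+c) \<le> 4a\<^sup>2 - k\<close>. For \<open>a \<ge> 0\<close> this yields
  \<open>8a\<^sup>2 \<le> -k\<close>; for fixed \<open>a\<close> it bounds \<open>c\<close> (and so \<open>b\<close> and \<open>d\<close>) unless \<open>a + b = 0\<close>, which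
  forces \<open>e = 0\<close>, i.e. the exceptional family \<open>(-l, l, c, c)\<close> with \<open>k = 4l\<^sup>2\<close>. A root
  quadruple with \<open>L < 0\<close> has \<open>a < 0\<close> and all its coordinates in \<open>[a, -a]\<close>.\<close>

lemma QD_eq_excess: "QD (a,b,c,d) = (a+b+c-d)^2 + 4*a^2 - 4*((a+b)*(a+c))"
  unfolding QD_def by (simp add: power2_eq_square algebra_simps)

lemma root_nonneg_excess:
  assumes "root_nonneg a b c d"
  shows "0 \<le> a+b+c-d" and "a+b+c-d \<le> a+b"
  using assms unfolding root_nonneg_def by auto

lemma root_nonneg_QD_bound:
  assumes "root_nonneg a b c d"
  shows "3*((a+b)*(a+c)) \<le> 4*a^2 - QD (a,b,c,d)"
proof -
  define e where "e = a+b+c-d"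
  have e: "0 \<le> e" "e \<le> a+b" using root_nonneg_excess[OF assms] unfolding e_def by auto
  have "e^2 \<le> (a+b)^2" using e by (simp add: power_mono)
  also have "\<dots> \<le> (a+b)*(a+c)"
    using e assms unfolding root_nonneg_def power2_eq_square by (simp add: mult_left_mono)
  finally show ?thesis unfolding QD_eq_excess e_def[symmetric] by linarith
qed

lemma root_nonneg_second_nonneg:
  assumes "root_nonneg a b c d"
  shows "0 \<le> b"
  using root_nonneg_excess[OF assms] assms unfolding root_nonneg_def by linarith

lemma root_nonneg_first_nonneg_QD:
  assumes "root_nonneg a b c d" and "0 \<le> a"
  shows "8*a^2 \<le> - QD (a,b,c,d)"
proof -
  have "2*a \<le> a+b" "2*a \<le> a+c" using assms unfolding root_nonneg_def by auto
  then have "(2*a)*(2*a) \<le> (a+b)*(a+c)" using assms(2) by (intro mult_mono) auto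
  then show ?thesis using root_nonneg_QD_bound[OF assms(1)] by (simp add: power2_eq_square)
qed

lemma root_nonneg_sign_bounds:
  assumes "root_nonneg a b c d"
  shows "0 < QD (a,b,c,d) \<Longrightarrow> a < 0"
    and "QD (a,b,c,d) \<le> 0 \<Longrightarrow> real_of_int a \<le> sqrt (real_of_int \<bar>QD (a,b,c,d)\<bar>)"
proof -
  show "0 < QD (a,b,c,d) \<Longrightarrow> a < 0"
    using root_nonneg_first_nonneg_QD[OF assms] by (smt (verit) zero_le_power2)
  show "real_of_int a \<le> sqrt (real_of_int \<bar>QD (a,b,c,d)\<bar>)"
  proof (cases "a < 0")
    case False
    then have "a^2 \<le> \<bar>QD (a,b,c,d)\<bar>"
      using root_nonneg_first_nonneg_QD[OF assms] by (smt (verit) zero_le_power2)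
    then have "real_of_int a ^ 2 \<le> real_of_int \<bar>QD (a,b,c,d)\<bar>"
      by (metis of_int_le_iff of_int_power)
    then show ?thesis by (rule real_le_rsqrt)
  qed (smt (verit) of_int_less_0_iff real_sqrt_ge_zero)
qed

lemma root_nonneg_degenerate:
  assumes "root_nonneg a b c d" and "a + b = 0"
  shows "d = c" and "QD (a,b,c,d) = 4*a^2"
proof -
  show "d = c" using root_nonneg_excess[OF assms(1)] assms unfolding root_nonneg_def by linarith
  then show "QD (a,b,c,d) = 4*a^2" using assms(2) unfolding QD_eq_excess by simp
qed

lemma root_nonneg_third_bound:
  assumes "root_nonneg a b c d" and "0 < a + b"
  shows "c \<le> 4*a^2 - QD (a,b,c,d) - a"
proof -
  have "b \<le> c" using assms(1) unfolding root_nonneg_def by simp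
  moreover have "a + c \<le> (a+b)*(a+c)"
    using assms \<open>b \<le> c\<close> by (simp add: mult_le_cancel_right1)
  ultimately show ?thesis using assms(2) root_nonneg_QD_bound[OF assms(1)] by linarith
qed

lemma root_quad_pos_Lsum:
  assumes "root_quad a b c d" and "0 < Lsum (a,b,c,d)"
  shows "root_nonneg a b c d"
  using assms unfolding root_quad_def by auto

lemma root_quad_bounded:
  assumes "root_quad a b c d" and "\<not> (a \<le> 0 \<and> QD (a,b,c,d) = 4*a^2)"
  shows "{b, c, d} \<subseteq> {a .. \<bar>a\<bar> + 8*a^2 + 2*\<bar>QD (a,b,c,d)\<bar>}"
  using assms(1) unfolding root_quad_def
proof (elim disjE conjE)
  assume root: "root_nonneg a b c d"
  have "a + b \<noteq> 0" using root_nonneg_degenerate[OF root] assms(2) root_nonneg_second_nonneg[OF root]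
    by force
  then have "0 < a + b" using root_nonneg_excess[OF root] by linarith
  with root_nonneg_third_bound[OF root] show ?thesis
    using root unfolding root_nonneg_def by auto
next
  assume "a \<le> b" "b \<le> c" "c \<le> d" and root: "root_nonneg (-d) (-c) (-b) (-a)"
  have "c \<le> 0" using root_nonneg_second_nonneg[OF root] by simp
  moreover have "b + c + d \<le> a" using root unfolding root_nonneg_def by simp
  moreover have "-a \<le> \<bar>a\<bar> + 8*a^2 + 2*\<bar>QD (a,b,c,d)\<bar>"
    by (smt (verit) abs_ge_self zero_le_power2)
  ultimately show ?thesis using \<open>a \<le> b\<close> \<open>b \<le> c\<close> \<open>c \<le> d\<close>
    unfolding insert_subset atLeastAtMost_iff by (intro conjI empty_subsetI; linarith)
qed

lemma finite_root_quads_first: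
  assumes "\<not> (n \<ge> 0 \<and> k = 4*n^2)"
  shows "finite {(a,b,c,d). root_quad a b c d \<and> QD (a,b,c,d) = k \<and> a = -n}"
proof (rule finite_subset)
  define I where "I = {-n .. \<bar>n\<bar> + 8*n^2 + 2*\<bar>k\<bar>}"
  show "{(a,b,c,d). root_quad a b c d \<and> QD (a,b,c,d) = k \<and> a = -n} \<subseteq> {-n} \<times> I \<times> I \<times> I"
    using root_quad_bounded assms unfolding I_def by fastforce
  show "finite ({-n} \<times> I \<times> I \<times> I)" unfolding I_def by simp
qed

lemma root_quad_exceptional:
  assumes "0 \<le> l" and "max l 1 \<le> c"
  shows "root_quad (-l) l c c" and "QD (-l,l,c,c) = 4*l^2"
proof -
  have "reduced (-l,l,c,c)"
    unfolding reduced_def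
  proof
    fix i :: nat assume "i \<in> {1..4}"
    then have "i = 1 \<or> i = 2 \<or> i = 3 \<or> i = 4" by auto
    then show "\<not> norm1 (S i (-l,l,c,c)) < norm1 (-l,l,c,c)"
      using assms unfolding S_def norm1_def by auto
  qed
  then show "root_quad (-l) l c c"
    using assms unfolding root_quad_def root_nonneg_def Lsum_def by auto
  show "QD (-l,l,c,c) = 4*l^2" unfolding QD_def by (simp add: power2_eq_square algebra_simps)
qed

theorem theorem3p3:
  fixes k :: int
  shows "(\<forall>a b c d. root_quad a b c d \<and> QD (a,b,c,d) = k \<and> a \<le> b \<and> b \<le> c \<and> c \<le> d
            \<and> Lsum (a,b,c,d) > 0 \<longrightarrow>
            0 \<le> b \<and> b \<le> c \<and> c \<le> d
            \<and> (k > 0 \<longrightarrow> a < 0)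
            \<and> (k \<le> 0 \<longrightarrow> real_of_int a \<le> sqrt (real_of_int \<bar>k\<bar>)))
       \<and> (\<forall>n::int. \<not> (\<exists>l::int. l \<ge> 0 \<and> k = 4 * l^2 \<and> n = l) \<longrightarrow>
            finite {(a,b,c,d). root_quad a b c d \<and> QD (a,b,c,d) = k \<and> a = -n})
       \<and> (\<forall>l::int. l \<ge> 0 \<and> k = 4 * l^2 \<longrightarrow>
            (\<forall>c::int. c \<ge> max l 1 \<longrightarrow> root_quad (-l) l c c \<and> QD (-l,l,c,c) = k))"
proof (intro conjI allI impI; (elim conjE)?)
  fix a b c d
  assume "root_quad a b c d" "QD (a,b,c,d) = k" "b \<le> c" "c \<le> d" "Lsum (a,b,c,d) > 0"
  then show "0 \<le> b" "b \<le> c" "c \<le> d" "k > 0 \<Longrightarrow> a < 0"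
    "k \<le> 0 \<Longrightarrow> real_of_int a \<le> sqrt (real_of_int \<bar>k\<bar>)"
    using root_quad_pos_Lsum root_nonneg_second_nonneg root_nonneg_sign_bounds by blast+
next
  fix n :: int
  assume "\<not> (\<exists>l. l \<ge> 0 \<and> k = 4 * l^2 \<and> n = l)"
  then show "finite {(a,b,c,d). root_quad a b c d \<and> QD (a,b,c,d) = k \<and> a = -n}"
    using finite_root_quads_first by blast
qed (use root_quad_exceptional in auto)

end
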